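(* In the qubit setting of the context, the optimal value of (PP) is $P_{succ}=\frac{1-\cos^2(2n\alpha)}{2(1-\cos(2n\alpha)\cos(2\alpha))}$ if $\cos(2n\alpha)>\frac{1}{\cos(2\alpha)+\sin(2\alpha)}$, and $P_{succ}=1-\cos(2n\alpha)\sin(2\alpha)$ if $\cos(2n\alpha)\le\frac{1}{\cos(2\alpha)+\sin(2\alpha)}$.
   Context: Fix an integer $n\ge1$ and real $\alpha$ with $0<\alpha<\pi/(4n)$. On $\mathbb{C}^2$ with computational basis $\{|0\rangle,|1\rangle\}$ let $|+\rangle=(|0\rangle+|1\rangle)/\sqrt2$, $U_0=e^{i\alpha}|0\rangle\langle0|+e^{-i\alpha}|1\rangle\langle1|$, $U_1=e^{-i\alpha}|0\rangle\langle0|+e^{i\alpha}|1\rangle\langle1|$, $|\psi^*_{n,i}\rangle=(U_i^* )^n|+\rangle$ (complex conjugation in the computational basis). For $A=\sum_{ij}A_{ij}|i\rangle\langle j|$ set $|A\rangle\!\rangle:=\sum_{ij}A_{ij}|j\rangle|i\rangle$. Systems $\mathcal H_0$ (memory), $\mathcal H_1$ (input), $\mathcal H_2$ (output) are copies of $\mathbb{C}^2$. The Choi operator of a linear map $\mathcal R:L(\mathcal H_0\otimes\mathcal H_1)\to L(\mathcal H_2)$ is $R=(\mathcal I\otimes\mathcal R)(|I\rangle\!\rangle\langle\!\langle I|)$. Let $D=\frac18\sum_{i=0,1}|\psi^*_{n,i}\rangle\langle\psi^*_{n,i}|\otimes|U_i\rangle\!\rangle\langle\!\langle U_i|$. Problem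 (PP): maximize $\mathrm{Tr}[R_sD]$ over $R_s\ge0$ with $\mathrm{Tr}_2R_s\le I$ satisfying the perfect retrieval condition: there are $\lambda_0,\lambda_1\ge0$ with $\langle\psi^*_{n,i}|R_s|\psi^*_{n,i}\rangle=\lambda_i|U_i\rangle\!\rangle\langle\!\langle U_i|$ for $i=0,1$ (partial inner product on $\mathcal H_0$); then $\mathrm{Tr}[R_sD]=(\lambda_0+\lambda_1)/2$ is the average success probability of perfectly retrieving $U_i$ from memory state $U_i^n|+\rangle$. *)

theory Defs
  imports Complex_Main
begin

text \<open>Operators on C^2 are functions nat => nat => complex
 (A j k = matrix entry <j|A|k>), vectors are nat => complex. Three-qubit
 operators on H0 (x) H1 (x) H2 are indexed by triples (a,b,c), a in H0 (memory),
 b in H1 (input), c in H2 (output).\<close>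

definition qb :: "nat set" where "qb = {0, 1}"

definition U0 :: "real \<Rightarrow> nat \<Rightarrow> nat \<Rightarrow> complex" where
  "U0 \<alpha> j k = (if j = k then (if j = 0 then cis \<alpha> else cis (- \<alpha>)) else 0)"

definition U1 :: "real \<Rightarrow> nat \<Rightarrow> nat \<Rightarrow> complex" where
  "U1 \<alpha> j k = (if j = k then (if j = 0 then cis (- \<alpha>) else cis \<alpha>) else 0)"

definition Uop :: "real \<Rightarrow> nat \<Rightarrow> nat \<Rightarrow> nat \<Rightarrow> complex" where
  "Uop \<alpha> i = (if i = 0 then U0 \<alpha> else U1 \<alpha>)"

definition ket_plus :: "nat \<Rightarrow> complex" where
  "ket_plus j = (if j \<in> qb then 1 / complex_of_real (sqrt 2) else 0)"

definition conj_op :: "(nat \<Rightarrow> nat \<Rightarrow> complex) \<Rightarrow> nat \<Rightarrow> nat \<Rightarrow> complex" where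
  "conj_op A j k = cnj (A j k)"

definition mmul2 :: "(nat \<Rightarrow> nat \<Rightarrow> complex) \<Rightarrow> (nat \<Rightarrow> nat \<Rightarrow> complex) \<Rightarrow> nat \<Rightarrow> nat \<Rightarrow> complex" where
  "mmul2 A B j k = (\<Sum>l\<in>qb. A j l * B l k)"

definition id2 :: "nat \<Rightarrow> nat \<Rightarrow> complex" where
  "id2 j k = (if j = k \<and> j \<in> qb then 1 else 0)"

definition mpow2 :: "(nat \<Rightarrow> nat \<Rightarrow> complex) \<Rightarrow> nat \<Rightarrow> nat \<Rightarrow> nat \<Rightarrow> complex" where
  "mpow2 A n = (mmul2 A ^^ n) id2"

definition mvec2 :: "(nat \<Rightarrow> nat \<Rightarrow> complex) \<Rightarrow> (nat \<Rightarrow> complex) \<Rightarrow> nat \<Rightarrow> complex" where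
  "mvec2 A v j = (\<Sum>k\<in>qb. A j k * v k)"

definition psi_star :: "nat \<Rightarrow> real \<Rightarrow> nat \<Rightarrow> nat \<Rightarrow> complex" where
  "psi_star n \<alpha> i = mvec2 (mpow2 (conj_op (Uop \<alpha> i)) n) ket_plus"

text \<open>|A>> = sum_{ij} A_ij |j>|i>, a vector on H1 (x) H2 indexed by (b,c):
 coefficient of |b>|c> is A c b.\<close>
definition dket :: "(nat \<Rightarrow> nat \<Rightarrow> complex) \<Rightarrow> nat \<times> nat \<Rightarrow> complex" where
  "dket A = (\<lambda>(b, c). A c b)"

definition B2 :: "(nat \<times> nat) set" where "B2 = qb \<times> qb"
definition B3 :: "(nat \<times> nat \<times> nat) set" where "B3 = qb \<times> qb \<times> qb"

definition psd_on :: "'a set \<Rightarrow> ('a \<Rightarrow> 'a \<Rightarrow> complex) \<Rightarrow> bool" where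
  "psd_on I A \<longleftrightarrow> (\<forall>v :: 'a \<Rightarrow> complex.
     (\<Sum>x\<in>I. \<Sum>y\<in>I. cnj (v x) * A x y * v y) \<in> \<real> \<and>
     Re (\<Sum>x\<in>I. \<Sum>y\<in>I. cnj (v x) * A x y * v y) \<ge> 0)"

definition ptrace2 :: "(nat \<times> nat \<times> nat \<Rightarrow> nat \<times> nat \<times> nat \<Rightarrow> complex) \<Rightarrow> nat \<times> nat \<Rightarrow> nat \<times> nat \<Rightarrow> complex" where
  "ptrace2 R = (\<lambda>(a, b) (a', b'). \<Sum>c\<in>qb. R (a, b, c) (a', b', c))"

definition ident_on :: "'a set \<Rightarrow> 'a \<Rightarrow> 'a \<Rightarrow> complex" where
  "ident_on I x y = (if x = y \<and> x \<in> I then 1 else 0)"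

definition pinner0 :: "(nat \<Rightarrow> complex) \<Rightarrow> (nat \<times> nat \<times> nat \<Rightarrow> nat \<times> nat \<times> nat \<Rightarrow> complex) \<Rightarrow> nat \<times> nat \<Rightarrow> nat \<times> nat \<Rightarrow> complex" where
  "pinner0 \<phi> R = (\<lambda>(b, c) (b', c'). \<Sum>a\<in>qb. \<Sum>a'\<in>qb. cnj (\<phi> a) * R (a, b, c) (a', b', c') * \<phi> a')"

definition outer :: "('a \<Rightarrow> complex) \<Rightarrow> 'a \<Rightarrow> 'a \<Rightarrow> complex" where
  "outer v x y = v x * cnj (v y)"

definition Dop :: "nat \<Rightarrow> real \<Rightarrow> nat \<times> nat \<times> nat \<Rightarrow> nat \<times> nat \<times> nat \<Rightarrow> complex" where
  "Dop n \<alpha> = (\<lambda>(a, b, c) (a', b', c'). (1/8) * (\<Sum>i\<in>qb.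
      outer (psi_star n \<alpha> i) a a' * outer (dket (Uop \<alpha> i)) (b, c) (b', c')))"

definition trace_on :: "'a set \<Rightarrow> ('a \<Rightarrow> 'a \<Rightarrow> complex) \<Rightarrow> complex" where
  "trace_on I A = (\<Sum>x\<in>I. A x x)"

definition mprod_on :: "'a set \<Rightarrow> ('a \<Rightarrow> 'a \<Rightarrow> complex) \<Rightarrow> ('a \<Rightarrow> 'a \<Rightarrow> complex) \<Rightarrow> 'a \<Rightarrow> 'a \<Rightarrow> complex" where
  "mprod_on I A B x y = (\<Sum>z\<in>I. A x z * B z y)"

definition PP_feasible :: "nat \<Rightarrow> real \<Rightarrow> (nat \<times> nat \<times> nat \<Rightarrow> nat \<times> nat \<times> nat \<Rightarrow> complex) \<Rightarrow> bool" where
  "PP_feasible n \<alpha> R \<longleftrightarrow>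
     psd_on B3 R \<and>
     psd_on B2 (\<lambda>x y. ident_on B2 x y - ptrace2 R x y) \<and>
     (\<exists>lam0 lam1 :: real. lam0 \<ge> 0 \<and> lam1 \<ge> 0 \<and>
        (\<forall>i\<in>qb. \<forall>x\<in>B2. \<forall>y\<in>B2.
           pinner0 (psi_star n \<alpha> i) R x y =
           complex_of_real (if i = 0 then lam0 else lam1) * outer (dket (Uop \<alpha> i)) x y))"

text \<open>Objective Tr[R D] (a real number for feasible R; we take the real part).\<close>
definition PP_objective :: "nat \<Rightarrow> real \<Rightarrow> (nat \<times> nat \<times> nat \<Rightarrow> nat \<times> nat \<times> nat \<Rightarrow> complex) \<Rightarrow> real" where
  "PP_objective n \<alpha> R = Re (trace_on B3 (mprod_on B3 R (Dop n \<alpha>)))"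

end

theory Submission
  imports Defs
begin

(*
  Let X_i = psi_i (x) |U_i>> with psi_i = psi_star n alpha i.  The retrieval condition gives
  <X_i|R|X_i> = 4 lambda_i, so the objective is (lambda_0 + lambda_1)/2, and, as R >= 0, it puts
  every psi_i (x) x with x orthogonal to |U_i>> into the kernel of R.  Hence on
  span(psi_0, psi_1) (x) |bb> the operator R is determined by lambda_0, lambda_1 and
  tau = <X_0|R|X_1>.  Testing Tr_2 R <= I on (psi_0 - u psi_1) (x) |b>, where |u| = 1 and
  <psi_0|psi_1> = cos 2n alpha, and R >= 0 on X_0 +- X_1, yields for L = 4 * objective
    L - (p cos 2alpha - q sin 2alpha) Re tau <= 4 - 4 p cos 2n alpha   for all p^2 + q^2 = 1,
    |Re tau| <= L,
  and optimising over (p, q) gives the upper bound.  It is attained by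
  R = sum_pq h_pq |f_p (x) U_p>><<f_q (x) U_q| with (f_p) the basis dual to (psi_i) and
  h = [[x, y], [y, x]]: then R >= 0 iff |y| <= x, both retrieval weights equal x, and
  Tr_2 R <= I iff |cos 2n alpha - y e^(2 i alpha)| <= 1 - x.
*)

lemma sum_qb: "(\<Sum>a\<in>qb. f a) = f 0 + f (1::nat)"
  by (simp add: qb_def)

lemma B2_eq: "B2 = {(0,0), (0,1), (1,0), (1,1)}"
  by (auto simp: B2_def qb_def)

lemma sum_B2: "(\<Sum>x\<in>B2. f x) = f (0,0) + f (0,1) + f (1,0) + f (1,1)"
  by (simp add: B2_eq add.assoc)

lemma sum_B3:
  "(\<Sum>x\<in>B3. f x) = f (0,0,0) + f (0,0,1) + f (0,1,0) + f (0,1,1)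
                   + f (1,0,0) + f (1,0,1) + f (1,1,0) + f (1,1,1)"
proof -
  have B3: "B3 = {(0,0,0), (0,0,1), (0,1,0), (0,1,1), (1,0,0), (1,0,1), (1,1,0), (1,1,1)}"
    by (auto simp: B3_def qb_def)
  show ?thesis
    unfolding B3 by (simp add: add.assoc)
qed

lemma cis_times_cnj_cis [simp]: "cnj (cis t) * cis t = 1" "cis t * cnj (cis t) = 1"
  by (simp_all add: cis_cnj cis_mult)

lemma cis_double: "cis t * cis t = cis (2 * t)"
  by (simp only: cis_mult mult_2)

lemma cis_square_diff: "cis t * cis t - cnj (cis t) * cnj (cis t) = 2 * \<i> * sin (2 * t)"
  by (simp add: cis_cnj cis_mult complex_eq_iff)

lemma of_real_sqrt2_square: "complex_of_real (sqrt 2) * complex_of_real (sqrt 2) = 2"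
  by (simp flip: of_real_mult)

lemma mpow2_diagonal:
  assumes "\<forall>j\<in>qb. \<forall>k\<in>qb. A j k = (if j = k then d j else 0)"
  shows "j \<in> qb \<Longrightarrow> k \<in> qb \<Longrightarrow> mpow2 A n j k = (if j = k then d j ^ n else 0)"
proof (induction n arbitrary: j k)
  case 0
  then show ?case by (simp add: mpow2_def id2_def)
next
  case (Suc n)
  have "mpow2 A (Suc n) j k = A j 0 * mpow2 A n 0 k + A j 1 * mpow2 A n 1 k"
    by (simp add: mpow2_def mmul2_def sum_qb)
  then show ?case
    using Suc assms by (auto simp: qb_def)
qed

lemma psi_star_entries:
  "psi_star n \<alpha> 0 0 = cnj (cis (n * \<alpha>)) / sqrt 2"
  "psi_star n \<alpha> 0 1 = cis (n * \<alpha>) / sqrt 2"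
  "psi_star n \<alpha> 1 0 = cis (n * \<alpha>) / sqrt 2"
  "psi_star n \<alpha> 1 1 = cnj (cis (n * \<alpha>)) / sqrt 2"
proof -
  have "\<forall>j\<in>qb. \<forall>k\<in>qb. conj_op (Uop \<alpha> 0) j k = (if j = k then (if j = 0 then cis (-\<alpha>) else cis \<alpha>) else 0)"
    and "\<forall>j\<in>qb. \<forall>k\<in>qb. conj_op (Uop \<alpha> (Suc 0)) j k = (if j = k then (if j = 0 then cis \<alpha> else cis (-\<alpha>)) else 0)"
    by (auto simp: qb_def conj_op_def Uop_def U0_def U1_def cis_cnj)
  note powers = mpow2_diagonal[OF this(1)] mpow2_diagonal[OF this(2)]
  show "psi_star n \<alpha> 0 0 = cnj (cis (n * \<alpha>)) / sqrt 2"
    and "psi_star n \<alpha> 0 1 = cis (n * \<alpha>) / sqrt 2"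
    and "psi_star n \<alpha> 1 0 = cis (n * \<alpha>) / sqrt 2"
    and "psi_star n \<alpha> 1 1 = cnj (cis (n * \<alpha>)) / sqrt 2"
    by (simp_all add: psi_star_def mvec2_def sum_qb powers qb_def ket_plus_def DeMoivre cis_cnj)
qed

lemmas psi_star_simps = psi_star_entries psi_star_entries[unfolded One_nat_def]

lemma dket_Uop_entries:
  "dket (Uop \<alpha> 0) (0,0) = cis \<alpha>" "dket (Uop \<alpha> 0) (1,1) = cnj (cis \<alpha>)"
  "dket (Uop \<alpha> 0) (0,1) = 0" "dket (Uop \<alpha> 0) (1,0) = 0"
  "dket (Uop \<alpha> 1) (0,0) = cnj (cis \<alpha>)" "dket (Uop \<alpha> 1) (1,1) = cis \<alpha>"
  "dket (Uop \<alpha> 1) (0,1) = 0" "dket (Uop \<alpha> 1) (1,0) = 0"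
  by (simp_all add: dket_def Uop_def U0_def U1_def cis_cnj)

lemmas dket_Uop_simps [simp] = dket_Uop_entries dket_Uop_entries[unfolded One_nat_def]

section \<open>Sesquilinear forms of positive operators\<close>

definition sesq :: "'a set \<Rightarrow> ('a \<Rightarrow> 'a \<Rightarrow> complex) \<Rightarrow> ('a \<Rightarrow> complex) \<Rightarrow> ('a \<Rightarrow> complex) \<Rightarrow> complex"
  where "sesq I R v w = (\<Sum>x\<in>I. \<Sum>y\<in>I. cnj (v x) * R x y * w y)"

lemma sesq_add_left: "sesq I R (\<lambda>x. v x + v' x) w = sesq I R v w + sesq I R v' w"
  unfolding sesq_def by (simp add: algebra_simps sum.distrib)

lemma sesq_add_right: "sesq I R w (\<lambda>x. v x + v' x) = sesq I R w v + sesq I R w v'"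
  unfolding sesq_def by (simp add: algebra_simps sum.distrib)

lemma sesq_scale_left: "sesq I R (\<lambda>x. a * v x) w = cnj a * sesq I R v w"
  unfolding sesq_def by (simp add: algebra_simps sum_distrib_left)

lemma sesq_scale_right: "sesq I R w (\<lambda>x. a * v x) = a * sesq I R w v"
  unfolding sesq_def by (simp add: algebra_simps sum_distrib_left)

lemmas sesq_linear = sesq_add_left sesq_add_right sesq_scale_left sesq_scale_right

lemma psd_on_iff_sesq: "psd_on I R \<longleftrightarrow> (\<forall>v. sesq I R v v \<in> \<real> \<and> 0 \<le> Re (sesq I R v v))"
  unfolding psd_on_def sesq_def ..

lemma psd_sesq_Im: "psd_on I R \<Longrightarrow> Im (sesq I R v v) = 0"
  by (simp add: psd_on_iff_sesq complex_is_Real_iff)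

lemma psd_sesq_Re: "psd_on I R \<Longrightarrow> 0 \<le> Re (sesq I R v v)"
  by (simp add: psd_on_iff_sesq)

lemma psd_sesq_swap:
  assumes "psd_on I R"
  shows "sesq I R w v = cnj (sesq I R v w)"
proof -
  note real = psd_sesq_Im[OF assms]
  have "sesq I R (\<lambda>x. v x + w x) (\<lambda>x. v x + w x)
      = sesq I R v v + sesq I R v w + sesq I R w v + sesq I R w w"
    by (simp add: sesq_linear)
  with real[of "\<lambda>x. v x + w x"] real[of v] real[of w]
  have "Im (sesq I R v w) + Im (sesq I R w v) = 0" by simp
  moreover have "sesq I R (\<lambda>x. v x + \<i> * w x) (\<lambda>x. v x + \<i> * w x)
      = sesq I R v v + \<i> * sesq I R v w - \<i> * sesq I R w v + sesq I R w w"
    by (simp add: sesq_linear algebra_simps)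
  with real[of "\<lambda>x. v x + \<i> * w x"] real[of v] real[of w]
  have "Re (sesq I R v w) - Re (sesq I R w v) = 0" by simp
  ultimately show ?thesis by (simp add: complex_eq_iff)
qed

lemma nonneg_quadratic_linear_coeff_zero:
  fixes a b :: real
  assumes "\<And>t. 0 \<le> a * t + b * t\<^sup>2"
  shows "a = 0"
proof (rule ccontr)
  assume "a \<noteq> 0"
  define B where "B = \<bar>b\<bar> + 1"
  have B: "B > 0" "b \<le> B" by (auto simp: B_def)
  define t where "t = - a / (2 * B)"
  have "a * t + b * t\<^sup>2 = - (a\<^sup>2 / (2 * B)) + b * a\<^sup>2 / (4 * B\<^sup>2)"
    by (simp add: t_def power2_eq_square field_simps)
  also have "b * a\<^sup>2 / (4 * B\<^sup>2) \<le> B * a\<^sup>2 / (4 * B\<^sup>2)"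
    using B by (intro divide_right_mono mult_right_mono) auto
  also have "B * a\<^sup>2 / (4 * B\<^sup>2) = a\<^sup>2 / (4 * B)"
    using B by (simp add: power2_eq_square field_simps)
  finally have "a * t + b * t\<^sup>2 \<le> - (a\<^sup>2 / (4 * B))"
    using B by (simp add: field_simps)
  moreover have "a\<^sup>2 / (4 * B) > 0"
    using B \<open>a \<noteq> 0\<close> by simp
  ultimately show False
    using assms[of t] by linarith
qed

lemma psd_sesq_kernel:
  assumes psd: "psd_on I R" and null: "sesq I R v v = 0"
  shows "sesq I R v w = 0"
proof -
  have Re_zero: "Re (sesq I R v u) = 0" for u
  proof -
    have "2 * Re (sesq I R v u) = 0"
    proof (rule nonneg_quadratic_linear_coeff_zero)
      fix t :: real
      have "sesq I R (\<lambda>x. v x + t * u x) (\<lambda>x. v x + t * u x)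
          = t * (sesq I R v u + cnj (sesq I R v u)) + t * t * sesq I R u u"
        using null psd_sesq_swap[OF psd, of u v] by (simp add: sesq_linear algebra_simps)
      then have "Re (sesq I R (\<lambda>x. v x + t * u x) (\<lambda>x. v x + t * u x))
          = 2 * Re (sesq I R v u) * t + Re (sesq I R u u) * t\<^sup>2"
        by (simp add: power2_eq_square algebra_simps)
      then show "0 \<le> 2 * Re (sesq I R v u) * t + Re (sesq I R u u) * t\<^sup>2"
        by (metis psd_sesq_Re[OF psd])
    qed
    then show ?thesis by simp
  qed
  have "Im (sesq I R v w) = - Re (sesq I R v (\<lambda>x. \<i> * w x))"
    by (simp add: sesq_scale_right)
  with Re_zero show ?thesis
    by (simp add: complex_eq_iff)
qed

section \<open>The retrieval condition\<close>

definition tensor_ket :: "(nat \<Rightarrow> complex) \<Rightarrow> (nat \<times> nat \<Rightarrow> complex) \<Rightarrow> nat \<times> nat \<times> nat \<Rightarrow> complex"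
  where "tensor_ket \<phi> x = (\<lambda>(a, b, c). \<phi> a * x (b, c))"

lemma sesq_tensor_ket:
  "sesq B3 R (tensor_ket \<phi> x) (tensor_ket \<phi> y) = sesq B2 (pinner0 \<phi> R) x y"
  unfolding sesq_def tensor_ket_def pinner0_def sum_B3 sum_B2 sum_qb
  by (simp add: algebra_simps)

definition perfect_retrieval ::
  "nat \<Rightarrow> real \<Rightarrow> (nat \<times> nat \<times> nat \<Rightarrow> nat \<times> nat \<times> nat \<Rightarrow> complex) \<Rightarrow> real \<Rightarrow> real \<Rightarrow> bool"
  where "perfect_retrieval n \<alpha> R l0 l1 \<longleftrightarrow> (\<forall>i\<in>qb. \<forall>x\<in>B2. \<forall>y\<in>B2.
     pinner0 (psi_star n \<alpha> i) R x y = complex_of_real (if i = 0 then l0 else l1) * outer (dket (Uop \<alpha> i)) x y)"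

lemma PP_feasible_iff:
  "PP_feasible n \<alpha> R \<longleftrightarrow> psd_on B3 R \<and> psd_on B2 (\<lambda>x y. ident_on B2 x y - ptrace2 R x y) \<and>
     (\<exists>l0 l1. 0 \<le> l0 \<and> 0 \<le> l1 \<and> perfect_retrieval n \<alpha> R l0 l1)"
  unfolding PP_feasible_def perfect_retrieval_def ..

lemma sesq_retrieval:
  assumes "perfect_retrieval n \<alpha> R l0 l1" "i \<in> qb"
  shows "sesq B3 R (tensor_ket (psi_star n \<alpha> i) x) (tensor_ket (psi_star n \<alpha> i) y)
    = (if i = 0 then l0 else l1)
      * (\<Sum>p\<in>B2. cnj (x p) * dket (Uop \<alpha> i) p) * (\<Sum>q\<in>B2. cnj (dket (Uop \<alpha> i) q) * y q)"
proof -
  have "sesq B2 (pinner0 (psi_star n \<alpha> i) R) x y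
      = sesq B2 (\<lambda>p q. complex_of_real (if i = 0 then l0 else l1) * outer (dket (Uop \<alpha> i)) p q) x y"
    using assms unfolding perfect_retrieval_def sesq_def by (auto intro!: sum.cong)
  then show ?thesis
    unfolding sesq_tensor_ket by (simp add: sesq_def outer_def sum_B2 algebra_simps)
qed

lemma dket_Uop_norm: "i \<in> qb \<Longrightarrow> (\<Sum>p\<in>B2. cnj (dket (Uop \<alpha> i) p) * dket (Uop \<alpha> i) p) = 2"
  by (auto simp: qb_def sum_B2)

abbreviation retrieval_ket :: "nat \<Rightarrow> real \<Rightarrow> nat \<Rightarrow> nat \<times> nat \<times> nat \<Rightarrow> complex"
  where "retrieval_ket n \<alpha> i \<equiv> tensor_ket (psi_star n \<alpha> i) (dket (Uop \<alpha> i))"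

lemma sesq_retrieval_ket:
  assumes "perfect_retrieval n \<alpha> R l0 l1" "i \<in> qb"
  shows "sesq B3 R (retrieval_ket n \<alpha> i) (retrieval_ket n \<alpha> i) = 4 * (if i = 0 then l0 else l1)"
  using sesq_retrieval[OF assms] dket_Uop_norm[OF assms(2)] by simp

lemma PP_objective_retrieval:
  assumes "perfect_retrieval n \<alpha> R l0 l1"
  shows "PP_objective n \<alpha> R = (l0 + l1) / 2"
proof -
  have "Dop n \<alpha> = (\<lambda>x y. 1/8 * (retrieval_ket n \<alpha> 0 x * cnj (retrieval_ket n \<alpha> 0 y)
                               + retrieval_ket n \<alpha> 1 x * cnj (retrieval_ket n \<alpha> 1 y)))"
    by (auto simp: Dop_def tensor_ket_def outer_def sum_qb fun_eq_iff algebra_simps)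
  then have "trace_on B3 (mprod_on B3 R (Dop n \<alpha>))
      = 1/8 * (sesq B3 R (retrieval_ket n \<alpha> 0) (retrieval_ket n \<alpha> 0)
               + sesq B3 R (retrieval_ket n \<alpha> 1) (retrieval_ket n \<alpha> 1))"
    unfolding trace_on_def mprod_on_def sesq_def
    by (simp add: sum_distrib_left sum.distrib algebra_simps)
  also have "\<dots> = complex_of_real ((l0 + l1) / 2)"
    using sesq_retrieval_ket[OF assms] by (simp add: qb_def)
  finally show ?thesis
    by (simp only: PP_objective_def Re_complex_of_real)
qed

lemma psi_star_gram:
  assumes "i \<in> qb" "j \<in> qb"
  shows "(\<Sum>a\<in>qb. cnj (psi_star n \<alpha> i a) * psi_star n \<alpha> j a) = (if i = j then 1 else cos (2 * real n * \<alpha>))"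
proof -
  have square: "cis t * cis t + cnj (cis t) * cnj (cis t) = complex_of_real (cos (2 * t)) * 2" for t
    by (simp add: cis_cnj cis_mult complex_eq_iff)
  show ?thesis
    using assms square[of "real n * \<alpha>"] of_real_sqrt2_square
    by (auto simp: qb_def sum_qb psi_star_simps divide_simps add_divide_distrib[symmetric] add.commute mult.assoc)
qed

lemma norm_psi_star_combination:
  "(\<Sum>a\<in>qb. cnj (z0 * psi_star n \<alpha> 0 a + z1 * psi_star n \<alpha> 1 a) * (z0 * psi_star n \<alpha> 0 a + z1 * psi_star n \<alpha> 1 a))
    = cnj z0 * z0 + cnj z1 * z1 + (cnj z0 * z1 + cnj z1 * z0) * cos (2 * real n * \<alpha>)"
proof -
  have "(\<Sum>a\<in>qb. cnj (z0 * psi_star n \<alpha> 0 a + z1 * psi_star n \<alpha> 1 a) * (z0 * psi_star n \<alpha> 0 a + z1 * psi_star n \<alpha> 1 a))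
      = cnj z0 * z0 * (\<Sum>a\<in>qb. cnj (psi_star n \<alpha> 0 a) * psi_star n \<alpha> 0 a)
      + cnj z1 * z1 * (\<Sum>a\<in>qb. cnj (psi_star n \<alpha> 1 a) * psi_star n \<alpha> 1 a)
      + cnj z0 * z1 * (\<Sum>a\<in>qb. cnj (psi_star n \<alpha> 0 a) * psi_star n \<alpha> 1 a)
      + cnj z1 * z0 * (\<Sum>a\<in>qb. cnj (psi_star n \<alpha> 1 a) * psi_star n \<alpha> 0 a)"
    by (simp add: sum_qb algebra_simps)
  also have "\<dots> = cnj z0 * z0 + cnj z1 * z1 + (cnj z0 * z1 + cnj z1 * z0) * cos (2 * real n * \<alpha>)"
    using psi_star_gram[of 0 0] psi_star_gram[of 1 1] psi_star_gram[of 0 1] psi_star_gram[of 1 0]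
    by (simp add: qb_def algebra_simps del: One_nat_def)
  finally show ?thesis .
qed

lemma sesq_diff_op: "sesq I (\<lambda>x y. A x y - B x y) v w = sesq I A v w - sesq I B v w"
  unfolding sesq_def by (simp add: algebra_simps sum_subtractf)

lemma sesq_ptrace2:
  "sesq B2 (ptrace2 R) w w
    = (\<Sum>c\<in>qb. sesq B3 R (\<lambda>(a, b, c'). w (a, b) * (if c' = c then 1 else 0))
                          (\<lambda>(a, b, c'). w (a, b) * (if c' = c then 1 else 0)))"
  by (simp add: sesq_def ptrace2_def sum_B2 sum_B3 sum_qb algebra_simps)

section \<open>The upper bound\<close>

definition ket_bb :: "nat \<Rightarrow> nat \<times> nat \<Rightarrow> complex"
  where "ket_bb b = (\<lambda>p. if p = (b, b) then 1 else 0)"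

lemma ptrace2_ket_bb_bound:
  assumes psd: "psd_on B3 R" and trace: "psd_on B2 (\<lambda>x y. ident_on B2 x y - ptrace2 R x y)"
    and b: "b \<in> qb"
  shows "Re (sesq B3 R (tensor_ket \<phi> (ket_bb b)) (tensor_ket \<phi> (ket_bb b)))
           \<le> Re (\<Sum>a\<in>qb. cnj (\<phi> a) * \<phi> a)"
proof -
  define w where "w = (\<lambda>(a, b'). \<phi> a * (if b' = b then 1 else (0::complex)))"
  define W where "W c = (\<lambda>(a, b', c'). w (a, b') * (if c' = c then 1 else (0::complex)))" for c :: nat
  have "0 \<le> Re (sesq B2 (\<lambda>x y. ident_on B2 x y - ptrace2 R x y) w w)"
    by (rule psd_sesq_Re[OF trace])
  also have "\<dots> = Re (\<Sum>a\<in>qb. cnj (\<phi> a) * \<phi> a) - (Re (sesq B3 R (W 0) (W 0)) + Re (sesq B3 R (W 1) (W 1)))"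
    using b unfolding sesq_diff_op sesq_ptrace2 W_def
    by (auto simp: sesq_def ident_on_def w_def sum_B2 B2_eq sum_qb qb_def)
  finally have "Re (sesq B3 R (W 0) (W 0)) + Re (sesq B3 R (W 1) (W 1)) \<le> Re (\<Sum>a\<in>qb. cnj (\<phi> a) * \<phi> a)"
    by simp
  moreover have "tensor_ket \<phi> (ket_bb b) = W b"
    using b by (auto simp: tensor_ket_def ket_bb_def W_def w_def fun_eq_iff qb_def)
  ultimately show ?thesis
    using b psd_sesq_Re[OF psd, of "W 0"] psd_sesq_Re[OF psd, of "W 1"] by (auto simp: qb_def)
qed

context
  fixes n :: nat and \<alpha> :: real and R :: "nat \<times> nat \<times> nat \<Rightarrow> nat \<times> nat \<times> nat \<Rightarrow> complex"
    and l0 l1 :: real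
  assumes psd: "psd_on B3 R"
    and trace: "psd_on B2 (\<lambda>x y. ident_on B2 x y - ptrace2 R x y)"
    and retrieval: "perfect_retrieval n \<alpha> R l0 l1"
begin

abbreviation coherence :: complex
  where "coherence \<equiv> sesq B3 R (retrieval_ket n \<alpha> 0) (retrieval_ket n \<alpha> 1)"

lemma sesq_ket_bb_diag:
  assumes "b \<in> qb" "i \<in> qb"
  shows "sesq B3 R (tensor_ket (psi_star n \<alpha> i) (ket_bb b)) (tensor_ket (psi_star n \<alpha> i) (ket_bb b))
           = (if i = 0 then l0 else l1)"
  using sesq_retrieval[OF retrieval assms(2)] assms by (auto simp: qb_def sum_B2 ket_bb_def)

text \<open>By the retrieval condition \<open>Y\<^sub>i = \<psi>\<^sub>i \<otimes> (|bb\<rangle> - \<langle>\<langle>U\<^sub>i|bb\<rangle> |U\<^sub>i\<rangle>\<rangle> / 2)\<close> has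
  \<open>\<langle>Y\<^sub>i|R|Y\<^sub>i\<rangle> = 0\<close>, so it lies in the kernel of \<open>R \<ge> 0\<close>.\<close>

lemma sesq_ket_bb_cross:
  assumes b: "b \<in> qb"
  shows "sesq B3 R (tensor_ket (psi_star n \<alpha> 0) (ket_bb b)) (tensor_ket (psi_star n \<alpha> 1) (ket_bb b))
           = dket (Uop \<alpha> 0) (b, b) * cnj (dket (Uop \<alpha> 1) (b, b)) / 4 * coherence"
proof -
  define g0 where "g0 = cnj (dket (Uop \<alpha> 0) (b, b)) / 2"
  define g1 where "g1 = cnj (dket (Uop \<alpha> 1) (b, b)) / 2"
  define Y0 where "Y0 = tensor_ket (psi_star n \<alpha> 0) (\<lambda>p. ket_bb b p - g0 * dket (Uop \<alpha> 0) p)"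
  define Y1 where "Y1 = tensor_ket (psi_star n \<alpha> 1) (\<lambda>p. ket_bb b p - g1 * dket (Uop \<alpha> 1) p)"
  have "sesq B3 R Y0 Y0 = 0"
    unfolding Y0_def using sesq_retrieval[OF retrieval, of 0] b
    by (auto simp: qb_def sum_B2 ket_bb_def g0_def)
  then have kernel0: "sesq B3 R Y0 w = 0" for w
    by (rule psd_sesq_kernel[OF psd])
  have "sesq B3 R Y1 Y1 = 0"
    unfolding Y1_def using sesq_retrieval[OF retrieval, of 1] b
    by (auto simp: qb_def sum_B2 ket_bb_def g1_def)
  then have kernel1: "sesq B3 R w Y1 = 0" for w
    using psd_sesq_kernel[OF psd] psd_sesq_swap[OF psd, of w Y1] by simp
  have split: "tensor_ket (psi_star n \<alpha> 0) (ket_bb b) = (\<lambda>x. Y0 x + g0 * retrieval_ket n \<alpha> 0 x)"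
    "tensor_ket (psi_star n \<alpha> 1) (ket_bb b) = (\<lambda>x. Y1 x + g1 * retrieval_ket n \<alpha> 1 x)"
    by (auto simp: Y0_def Y1_def tensor_ket_def fun_eq_iff algebra_simps)
  show ?thesis
    unfolding split sesq_linear kernel0 kernel1 by (simp add: g0_def g1_def)
qed

lemma ket_bb_block_bound:
  assumes b: "b \<in> qb" and u: "cnj u * u = 1"
  shows "l0 + l1 - 2 * Re (u * sesq B3 R (tensor_ket (psi_star n \<alpha> 0) (ket_bb b))
                                         (tensor_ket (psi_star n \<alpha> 1) (ket_bb b)))
           \<le> 2 - 2 * cos (2 * real n * \<alpha>) * Re u"
proof -
  define T0 where "T0 = tensor_ket (psi_star n \<alpha> 0) (ket_bb b)"
  define T1 where "T1 = tensor_ket (psi_star n \<alpha> 1) (ket_bb b)"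
  define \<phi> where "\<phi> a = psi_star n \<alpha> 0 a + (- u) * psi_star n \<alpha> 1 a" for a
  have split: "tensor_ket \<phi> (ket_bb b) = (\<lambda>x. T0 x + (- u) * T1 x)"
    by (auto simp: \<phi>_def T0_def T1_def tensor_ket_def fun_eq_iff algebra_simps)
  have "sesq B3 R (tensor_ket \<phi> (ket_bb b)) (tensor_ket \<phi> (ket_bb b))
      = sesq B3 R T0 T0 - u * sesq B3 R T0 T1 - cnj (u * sesq B3 R T0 T1) + cnj u * u * sesq B3 R T1 T1"
    unfolding split sesq_linear psd_sesq_swap[OF psd, of T1 T0] by (simp add: algebra_simps)
  also have "\<dots> = l0 + l1 - (u * sesq B3 R T0 T1 + cnj (u * sesq B3 R T0 T1))"
    using sesq_ket_bb_diag[OF b, of 0] sesq_ket_bb_diag[OF b, of 1] u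
    by (simp add: T0_def T1_def qb_def)
  finally have lhs: "Re (sesq B3 R (tensor_ket \<phi> (ket_bb b)) (tensor_ket \<phi> (ket_bb b)))
      = l0 + l1 - 2 * Re (u * sesq B3 R T0 T1)"
    by simp
  have "(\<Sum>a\<in>qb. cnj (\<phi> a) * \<phi> a) = 1 + cnj u * u - (u + cnj u) * cos (2 * real n * \<alpha>)"
    using norm_psi_star_combination[of 1 n \<alpha> "- u"] by (simp add: \<phi>_def algebra_simps)
  then have rhs: "Re (\<Sum>a\<in>qb. cnj (\<phi> a) * \<phi> a) = 2 - 2 * cos (2 * real n * \<alpha>) * Re u"
    using u by (simp add: complex_add_cnj)
  show ?thesis
    using ptrace2_ket_bb_bound[OF psd trace b, of \<phi>] unfolding lhs rhs T0_def T1_def .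
qed

lemma retrieval_coherence_bound: "\<bar>Re coherence\<bar> \<le> 2 * (l0 + l1)"
proof -
  have diag: "sesq B3 R (retrieval_ket n \<alpha> 0) (retrieval_ket n \<alpha> 0) = 4 * l0"
    "sesq B3 R (retrieval_ket n \<alpha> 1) (retrieval_ket n \<alpha> 1) = 4 * l1"
    using sesq_retrieval_ket[OF retrieval, of 0] sesq_retrieval_ket[OF retrieval, of 1]
    by (simp_all add: qb_def)
  have swap: "sesq B3 R (retrieval_ket n \<alpha> 1) (retrieval_ket n \<alpha> 0) = cnj coherence"
    by (rule psd_sesq_swap[OF psd])
  have "0 \<le> Re (sesq B3 R (\<lambda>x. retrieval_ket n \<alpha> 0 x + s * retrieval_ket n \<alpha> 1 x)
                          (\<lambda>x. retrieval_ket n \<alpha> 0 x + s * retrieval_ket n \<alpha> 1 x))" for s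
    by (rule psd_sesq_Re[OF psd])
  from this[of 1] this[of "-1"] show ?thesis
    unfolding sesq_linear diag swap by simp
qed

lemma retrieval_trade_off:
  assumes "p\<^sup>2 + q\<^sup>2 = 1"
  shows "2 * (l0 + l1) - (p * cos (2 * \<alpha>) - q * sin (2 * \<alpha>)) * Re coherence \<le> 4 - 4 * cos (2 * real n * \<alpha>) * p"
proof -
  \<comment> \<open>Add the block bounds for \<open>b = 0, u = w\<close> and \<open>b = 1, u = cnj w\<close>.\<close>
  define w where "w = Complex p q"
  define z where "z = w * cis (2 * \<alpha>)"
  have w: "cnj w * w = 1" "cnj (cnj w) * cnj w = 1"
    using assms by (simp_all add: w_def complex_eq_iff power2_eq_square)
  have Re_w: "Re w = p"
    by (simp add: w_def)
  have qb: "0 \<in> qb" "1 \<in> qb"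
    by (simp_all add: qb_def)
  note e = cis_double[of \<alpha>]
  then have cross0: "sesq B3 R (tensor_ket (psi_star n \<alpha> 0) (ket_bb 0)) (tensor_ket (psi_star n \<alpha> 1) (ket_bb 0))
      = cis (2 * \<alpha>) / 4 * coherence"
    using sesq_ket_bb_cross[OF qb(1)] by (simp only: dket_Uop_entries complex_cnj_cnj)
  then have "Re (w * sesq B3 R (tensor_ket (psi_star n \<alpha> 0) (ket_bb 0)) (tensor_ket (psi_star n \<alpha> 1) (ket_bb 0)))
      = Re (z * coherence) / 4"
    unfolding cross0 z_def by (simp add: mult_ac)
  with ket_bb_block_bound[OF qb(1) w(1)]
  have "l0 + l1 - Re (z * coherence) / 2 \<le> 2 - 2 * cos (2 * real n * \<alpha>) * p"
    unfolding Re_w by linarith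
  moreover have "cnj (cis \<alpha>) * cnj (cis \<alpha>) = cnj (cis (2 * \<alpha>))"
    by (simp only: e[symmetric] complex_cnj_mult)
  then have cross1: "sesq B3 R (tensor_ket (psi_star n \<alpha> 0) (ket_bb 1)) (tensor_ket (psi_star n \<alpha> 1) (ket_bb 1))
      = cnj (cis (2 * \<alpha>)) / 4 * coherence"
    using sesq_ket_bb_cross[OF qb(2)] by (simp only: dket_Uop_entries complex_cnj_cnj)
  then have "Re (cnj w * sesq B3 R (tensor_ket (psi_star n \<alpha> 0) (ket_bb 1)) (tensor_ket (psi_star n \<alpha> 1) (ket_bb 1)))
      = Re (cnj z * coherence) / 4"
    unfolding cross1 z_def by (simp add: mult_ac)
  with ket_bb_block_bound[OF qb(2) w(2)]
  have "l0 + l1 - Re (cnj z * coherence) / 2 \<le> 2 - 2 * cos (2 * real n * \<alpha>) * p"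
    unfolding complex_cnj_cnj cnj.sel Re_w by linarith
  moreover have "Re (z * coherence) + Re (cnj z * coherence) = 2 * ((p * cos (2 * \<alpha>) - q * sin (2 * \<alpha>)) * Re coherence)"
    by (simp add: z_def w_def algebra_simps)
  ultimately show ?thesis
    by argo
qed
end

lemma PP_feasible_trade_off:
  assumes "PP_feasible n \<alpha> R"
  obtains t where "\<bar>t\<bar> \<le> 4 * PP_objective n \<alpha> R"
    and "\<And>p q. p\<^sup>2 + q\<^sup>2 = 1 \<Longrightarrow>
           4 * PP_objective n \<alpha> R - (p * cos (2 * \<alpha>) - q * sin (2 * \<alpha>)) * t
             \<le> 4 - 4 * cos (2 * real n * \<alpha>) * p"
proof -
  obtain l0 l1 where psd: "psd_on B3 R" and trace: "psd_on B2 (\<lambda>x y. ident_on B2 x y - ptrace2 R x y)"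
    and retrieval: "perfect_retrieval n \<alpha> R l0 l1"
    using assms unfolding PP_feasible_iff by blast
  have objective: "4 * PP_objective n \<alpha> R = 2 * (l0 + l1)"
    using PP_objective_retrieval[OF retrieval] by simp
  show ?thesis
  proof (rule that)
    show "\<bar>Re (coherence n \<alpha> R)\<bar> \<le> 4 * PP_objective n \<alpha> R"
      using retrieval_coherence_bound[OF psd trace retrieval] unfolding objective .
    show "4 * PP_objective n \<alpha> R - (p * cos (2 * \<alpha>) - q * sin (2 * \<alpha>)) * Re (coherence n \<alpha> R)
            \<le> 4 - 4 * cos (2 * real n * \<alpha>) * p" if "p\<^sup>2 + q\<^sup>2 = 1" for p q
      using retrieval_trade_off[OF psd trace retrieval that] unfolding objective .
  qed
qed

section \<open>The optimal operator\<close>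

definition herm2 :: "real \<Rightarrow> complex \<Rightarrow> nat \<Rightarrow> nat \<Rightarrow> complex"
  where "herm2 d q i j = (if i = j then d else if i = 0 then q else cnj q)"

lemma sesq_herm2:
  "sesq qb (herm2 d q) v v
    = d * (cnj (v 0) * v 0) + d * (cnj (v 1) * v 1) + cnj (v 0) * q * v 1 + cnj (v 1) * cnj q * v 0"
  by (simp add: sesq_def herm2_def sum_qb algebra_simps)

lemma psd_herm2:
  assumes "cmod q \<le> d"
  shows "psd_on qb (herm2 d q)"
  unfolding psd_on_iff_sesq
proof
  fix z :: "nat \<Rightarrow> complex"
  define X where "X = cnj (z 0) * q * z 1"
  have expand: "sesq qb (herm2 d q) z z = d * (cnj (z 0) * z 0) + d * (cnj (z 1) * z 1) + (X + cnj X)"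
    by (simp add: X_def sesq_herm2 algebra_simps)
  have norm: "cnj w * w = complex_of_real ((cmod w)\<^sup>2)" for w
    by (metis complex_norm_square mult.commute)
  have "- (cmod (z 0) * d * cmod (z 1)) \<le> - (cmod (z 0) * cmod q * cmod (z 1))"
    using assms by (simp add: mult_right_mono mult_left_mono)
  also have "\<dots> \<le> Re X"
    using abs_Re_le_cmod[of X] by (simp add: X_def norm_mult)
  moreover have "0 \<le> d * (cmod (z 0) - cmod (z 1))\<^sup>2"
    using assms norm_ge_zero[of q] by (intro mult_nonneg_nonneg) (linarith, simp)
  moreover have "d * (cmod (z 0) - cmod (z 1))\<^sup>2
      = d * (cmod (z 0))\<^sup>2 + d * (cmod (z 1))\<^sup>2 - 2 * (cmod (z 0) * d * cmod (z 1))"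
    by (simp add: power2_diff algebra_simps)
  ultimately have "0 \<le> d * (cmod (z 0))\<^sup>2 + d * (cmod (z 1))\<^sup>2 + 2 * Re X"
    by linarith
  then show "sesq qb (herm2 d q) z z \<in> \<real> \<and> 0 \<le> Re (sesq qb (herm2 d q) z z)"
    unfolding expand norm complex_add_cnj by simp
qed

lemma sesq_rank_form:
  "sesq A (\<lambda>x y. \<Sum>p\<in>qb. \<Sum>q\<in>qb. h p q * F p x * cnj (F q y)) v v
    = sesq qb h (\<lambda>p. \<Sum>x\<in>A. cnj (F p x) * v x) (\<lambda>p. \<Sum>x\<in>A. cnj (F p x) * v x)"
  unfolding sesq_def sum_qb
  by (simp add: sum_distrib_left sum_distrib_right sum.distrib algebra_simps)

text \<open>The basis dual to \<open>(\<psi>\<^sub>0, \<psi>\<^sub>1)\<close>; it exists only when \<open>sin (2 n \<alpha>) \<noteq> 0\<close>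
  (otherwise the definition divides by zero).\<close>

definition dual_ket :: "nat \<Rightarrow> real \<Rightarrow> nat \<Rightarrow> nat \<Rightarrow> complex"
  where "dual_ket n \<alpha> p a = (if p = a then cis (n * \<alpha>) else - cnj (cis (n * \<alpha>)))
                             / (sqrt 2 * \<i> * sin (2 * real n * \<alpha>))"

lemma herm2_block_identity:
  fixes C x y :: real
  assumes "cnj (u 0) * u 0 = 1" "cnj (u 1) * u 1 = 1"
  shows "cnj (z 0) * z 0 + cnj (z 1) * z 1 + (cnj (z 0) * z 1 + cnj (z 1) * z 0) * C
           - sesq qb (herm2 x y) (\<lambda>p. cnj (u p) * z p) (\<lambda>p. cnj (u p) * z p)
         = sesq qb (herm2 (1 - x) (C - y * (u 0 * cnj (u 1)))) z z"
proof -
  have unit: "cnj (cnj (u p) * z p) * (cnj (u p) * z p) = cnj (z p) * z p" if "cnj (u p) * u p = 1" for p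
  proof -
    have "cnj (cnj (u p) * z p) * (cnj (u p) * z p) = (cnj (u p) * u p) * (cnj (z p) * z p)"
      by (simp add: algebra_simps)
    then show ?thesis
      using that by simp
  qed
  show ?thesis
    unfolding sesq_herm2 unit[OF assms(1)] unit[OF assms(2)] by (simp add: algebra_simps)
qed

definition primal_R :: "nat \<Rightarrow> real \<Rightarrow> real \<Rightarrow> real \<Rightarrow> nat \<times> nat \<times> nat \<Rightarrow> nat \<times> nat \<times> nat \<Rightarrow> complex"
  where "primal_R n \<alpha> x y = (\<lambda>X Y. \<Sum>p\<in>qb. \<Sum>q\<in>qb. herm2 x y p q
           * tensor_ket (dual_ket n \<alpha> p) (dket (Uop \<alpha> p)) X
           * cnj (tensor_ket (dual_ket n \<alpha> q) (dket (Uop \<alpha> q)) Y))"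

lemma psd_primal_R:
  assumes "\<bar>y\<bar> \<le> x"
  shows "psd_on B3 (primal_R n \<alpha> x y)"
proof -
  have "psd_on qb (herm2 x y)"
    using assms by (intro psd_herm2) simp
  then show ?thesis
    unfolding psd_on_iff_sesq primal_R_def sesq_rank_form by blast
qed

lemma primal_R_coordinates:
  assumes "c \<in> qb" "p \<in> qb"
  shows "(\<Sum>X\<in>B3. cnj (tensor_ket (dual_ket n \<alpha> p) (dket (Uop \<alpha> p)) X)
                  * (\<lambda>(a, b, c'). w (a, b) * (if c' = c then 1 else 0)) X)
         = cnj (dket (Uop \<alpha> p) (c, c)) * (\<Sum>a\<in>qb. cnj (dual_ket n \<alpha> p a) * w (a, c))"
  using assms by (auto simp: qb_def sum_B3 sum_qb tensor_ket_def algebra_simps)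

lemma sesq_ptrace2_primal_R:
  "sesq B2 (ptrace2 (primal_R n \<alpha> x y)) w w
    = (\<Sum>c\<in>qb. sesq qb (herm2 x y)
         (\<lambda>p. cnj (dket (Uop \<alpha> p) (c, c)) * (\<Sum>a\<in>qb. cnj (dual_ket n \<alpha> p a) * w (a, c)))
         (\<lambda>p. cnj (dket (Uop \<alpha> p) (c, c)) * (\<Sum>a\<in>qb. cnj (dual_ket n \<alpha> p a) * w (a, c))))"
  unfolding sesq_ptrace2 primal_R_def sesq_rank_form
  by (intro sum.cong refl) (simp add: sesq_def primal_R_coordinates)

lemma sesq_ident_B2: "sesq B2 (ident_on B2) w w = (\<Sum>c\<in>qb. \<Sum>a\<in>qb. cnj (w (a, c)) * w (a, c))"
  by (simp add: sesq_def ident_on_def sum_B2 B2_eq sum_qb)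

context
  fixes n :: nat and \<alpha> :: real
  assumes sin_nonzero: "sin (2 * real n * \<alpha>) \<noteq> 0"
begin

lemma psi_star_dual_ket:
  assumes "i \<in> qb" "p \<in> qb"
  shows "(\<Sum>a\<in>qb. cnj (psi_star n \<alpha> i a) * dual_ket n \<alpha> p a) = (if i = p then 1 else 0)"
  using assms sin_nonzero cis_square_diff of_real_sqrt2_square
  by (auto simp: qb_def sum_qb psi_star_simps dual_ket_def field_simps mult.assoc)

lemma dual_ket_complete:
  assumes "a \<in> qb" "a' \<in> qb"
  shows "(\<Sum>p\<in>qb. psi_star n \<alpha> p a * cnj (dual_ket n \<alpha> p a')) = (if a = a' then 1 else 0)"
  using assms sin_nonzero cis_square_diff of_real_sqrt2_square
  by (auto simp: qb_def sum_qb psi_star_simps dual_ket_def field_simps mult.assoc)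

lemma dual_ket_reconstruction:
  assumes "a \<in> qb"
  shows "(\<Sum>p\<in>qb. (\<Sum>a'\<in>qb. cnj (dual_ket n \<alpha> p a') * v a') * psi_star n \<alpha> p a) = v a"
proof -
  have "(\<Sum>p\<in>qb. (\<Sum>a'\<in>qb. cnj (dual_ket n \<alpha> p a') * v a') * psi_star n \<alpha> p a)
      = (\<Sum>a'\<in>qb. v a' * (\<Sum>p\<in>qb. psi_star n \<alpha> p a * cnj (dual_ket n \<alpha> p a')))"
    by (simp add: sum_qb algebra_simps)
  also have "\<dots> = (\<Sum>a'\<in>qb. v a' * (if a = a' then 1 else 0))"
    using dual_ket_complete[OF assms] by (intro sum.cong) auto
  also have "\<dots> = v a"
    using assms by (auto simp: qb_def sum_qb)
  finally show ?thesis .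
qed

lemma norm_dual_coordinates:
  fixes v :: "nat \<Rightarrow> complex"
  defines "z p \<equiv> \<Sum>a\<in>qb. cnj (dual_ket n \<alpha> p a) * v a"
  shows "(\<Sum>a\<in>qb. cnj (v a) * v a)
    = cnj (z 0) * z 0 + cnj (z 1) * z 1 + (cnj (z 0) * z 1 + cnj (z 1) * z 0) * cos (2 * real n * \<alpha>)"
proof -
  have "v a = z 0 * psi_star n \<alpha> 0 a + z 1 * psi_star n \<alpha> 1 a" if "a \<in> qb" for a
    using dual_ket_reconstruction[OF that, of v] by (simp add: z_def sum_qb)
  then have "(\<Sum>a\<in>qb. cnj (v a) * v a)
      = (\<Sum>a\<in>qb. cnj (z 0 * psi_star n \<alpha> 0 a + z 1 * psi_star n \<alpha> 1 a)
                 * (z 0 * psi_star n \<alpha> 0 a + z 1 * psi_star n \<alpha> 1 a))"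
    by (intro sum.cong) auto
  also have "\<dots> = cnj (z 0) * z 0 + cnj (z 1) * z 1 + (cnj (z 0) * z 1 + cnj (z 1) * z 0) * cos (2 * real n * \<alpha>)"
    by (rule norm_psi_star_combination)
  finally show ?thesis .
qed

lemma primal_R_retrieval: "perfect_retrieval n \<alpha> (primal_R n \<alpha> x y) x x"
  unfolding perfect_retrieval_def
proof (clarify)
  fix i b c b' c'
  assume i: "i \<in> qb"
  have "pinner0 (psi_star n \<alpha> i) (primal_R n \<alpha> x y) (b, c) (b', c')
      = (\<Sum>p\<in>qb. \<Sum>q\<in>qb. herm2 x y p q
           * (\<Sum>a\<in>qb. cnj (psi_star n \<alpha> i a) * dual_ket n \<alpha> p a)
           * cnj (\<Sum>a\<in>qb. cnj (psi_star n \<alpha> i a) * dual_ket n \<alpha> q a)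
           * dket (Uop \<alpha> p) (b, c) * cnj (dket (Uop \<alpha> q) (b', c')))"
    unfolding pinner0_def primal_R_def tensor_ket_def sum_qb by (simp add: algebra_simps)
  also have "\<dots> = (\<Sum>p\<in>qb. \<Sum>q\<in>qb. herm2 x y p q
           * (if i = p then 1 else 0) * cnj (if i = q then 1 else 0)
           * dket (Uop \<alpha> p) (b, c) * cnj (dket (Uop \<alpha> q) (b', c')))"
    by (intro sum.cong refl) (simp add: psi_star_dual_ket[OF i])
  also have "\<dots> = x * outer (dket (Uop \<alpha> i)) (b, c) (b', c')"
    using i by (auto simp: sum_qb qb_def herm2_def outer_def)
  finally show "pinner0 (psi_star n \<alpha> i) (primal_R n \<alpha> x y) (b, c) (b', c')
      = complex_of_real (if i = 0 then x else x) * outer (dket (Uop \<alpha> i)) (b, c) (b', c')"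
    by simp
qed

lemma primal_R_trace:
  fixes x y :: real
  assumes "cmod (cos (2 * real n * \<alpha>) - y * cis (2 * \<alpha>)) \<le> 1 - x"
  shows "psd_on B2 (\<lambda>X Y. ident_on B2 X Y - ptrace2 (primal_R n \<alpha> x y) X Y)"
  unfolding psd_on_iff_sesq
proof
  fix w :: "nat \<times> nat \<Rightarrow> complex"
  define z where "z c p = (\<Sum>a\<in>qb. cnj (dual_ket n \<alpha> p a) * w (a, c))" for c p
  define u where "u c p = dket (Uop \<alpha> p) (c, c)" for c p
  define Q where "Q c = cos (2 * real n * \<alpha>) - y * (u c 0 * cnj (u c 1))" for c
  have "Q 0 = cos (2 * real n * \<alpha>) - y * cis (2 * \<alpha>)"
    by (simp add: Q_def u_def cis_double)
  moreover have "Q 1 = cnj (Q 0)"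
    by (simp add: Q_def u_def)
  then have "cmod (Q 1) = cmod (Q 0)"
    by (simp only: complex_mod_cnj)
  ultimately have "cmod (Q c) \<le> 1 - x" if "c \<in> qb" for c
    using that assms by (auto simp: qb_def)
  then have psd_block: "psd_on qb (herm2 (1 - x) (Q c))" if "c \<in> qb" for c
    using that by (simp add: psd_herm2)
  have block: "(\<Sum>a\<in>qb. cnj (w (a, c)) * w (a, c))
      - sesq qb (herm2 x y) (\<lambda>p. cnj (u c p) * z c p) (\<lambda>p. cnj (u c p) * z c p)
      = sesq qb (herm2 (1 - x) (Q c)) (z c) (z c)" if "c \<in> qb" for c
  proof -
    have "cnj (u c 0) * u c 0 = 1" "cnj (u c 1) * u c 1 = 1"
      using that by (auto simp: u_def qb_def)
    then show ?thesis
      unfolding norm_dual_coordinates[of "\<lambda>a. w (a, c)"] z_def[symmetric] Q_def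
      by (rule herm2_block_identity)
  qed
  have "sesq B2 (\<lambda>X Y. ident_on B2 X Y - ptrace2 (primal_R n \<alpha> x y) X Y) w w
      = (\<Sum>c\<in>qb. sesq qb (herm2 (1 - x) (Q c)) (z c) (z c))"
    unfolding sesq_diff_op sesq_ident_B2 sesq_ptrace2_primal_R sum_subtractf[symmetric]
      z_def[symmetric] u_def[symmetric]
    using block by (intro sum.cong) auto
  then show "sesq B2 (\<lambda>X Y. ident_on B2 X Y - ptrace2 (primal_R n \<alpha> x y) X Y) w w \<in> \<real>
      \<and> 0 \<le> Re (sesq B2 (\<lambda>X Y. ident_on B2 X Y - ptrace2 (primal_R n \<alpha> x y) X Y) w w)"
    using psd_block[unfolded psd_on_iff_sesq] by (auto simp: sum_qb qb_def)
qed

lemma PP_attainable: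
  fixes x y :: real
  assumes "\<bar>y\<bar> \<le> x" and "cmod (cos (2 * real n * \<alpha>) - y * cis (2 * \<alpha>)) \<le> 1 - x"
  shows "\<exists>R. PP_feasible n \<alpha> R \<and> PP_objective n \<alpha> R = x"
proof (intro exI conjI)
  have "0 \<le> x"
    using assms(1) by linarith
  then show "PP_feasible n \<alpha> (primal_R n \<alpha> x y)"
    unfolding PP_feasible_iff using psd_primal_R[OF assms(1)] primal_R_trace[OF assms(2)] primal_R_retrieval
    by blast
  show "PP_objective n \<alpha> (primal_R n \<alpha> x y) = x"
    using PP_objective_retrieval[OF primal_R_retrieval] by simp
qed

end

section \<open>Optimising the trade-off\<close>

definition optimal_value :: "real \<Rightarrow> real \<Rightarrow> real \<Rightarrow> real"
  where "optimal_value c k s =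
    (if c > 1 / (k + s) then (1 - c\<^sup>2) / (2 * (1 - c * k)) else 1 - c * s)"

lemma regime1_point:
  fixes c k s :: real
  assumes ks: "k\<^sup>2 + s\<^sup>2 = 1" and c: "0 < c" "c < 1" and k: "0 < k" and s: "0 < s"
    and regime: "1 < c * (k + s)"
  defines "x \<equiv> (1 - c\<^sup>2) / (2 * (1 - c * k))"
  shows "0 \<le> x" "x < 1" "x \<le> c * k" "(c - x * k)\<^sup>2 + (x * s)\<^sup>2 = (1 - x)\<^sup>2"
    and "2 * x * (1 - c * k) = 1 - c\<^sup>2" "0 < 1 - c * k"
proof -
  have "k\<^sup>2 \<le> 1"
    using ks zero_le_power2[of s] by linarith
  then have "k \<le> 1"
    using power2_le_iff_abs_le[of 1 k] by simp
  then have "c * k \<le> c"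
    using c by (simp add: mult_left_le)
  then show ck: "0 < 1 - c * k"
    using c by linarith
  show x: "2 * x * (1 - c * k) = 1 - c\<^sup>2"
    using ck by (simp add: x_def field_simps)
  show "0 \<le> x"
    unfolding x_def using c ck by (intro divide_nonneg_pos) (auto intro: power_le_one)
  have "2 * (1 - x) * (1 - c * k) = (c - k)\<^sup>2 + s\<^sup>2"
    using x ks by (simp add: algebra_simps power2_eq_square)
  moreover have "0 < (c - k)\<^sup>2 + s\<^sup>2"
    using s by (simp add: add_nonneg_pos)
  ultimately have "0 < (1 - x) * (2 * (1 - c * k))"
    by (simp add: algebra_simps)
  then show "x < 1"
    using ck by (simp add: zero_less_mult_iff)
  have "(1 - c * k)\<^sup>2 \<le> (c * s)\<^sup>2"
    using regime ck by (intro power_mono) (auto simp: algebra_simps)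
  also have "(c * s)\<^sup>2 = c\<^sup>2 * (1 - k\<^sup>2)"
    using ks by (simp add: power_mult_distrib)
  finally have "1 - c\<^sup>2 \<le> 2 * c * k * (1 - c * k)"
    by (simp add: power2_eq_square algebra_simps)
  then show "x \<le> c * k"
    unfolding x_def using ck by (simp add: pos_divide_le_eq algebra_simps)
  have "(c - x * k)\<^sup>2 + (x * s)\<^sup>2 = c\<^sup>2 - 2 * c * x * k + x\<^sup>2 * (k\<^sup>2 + s\<^sup>2)"
    by (simp add: power2_eq_square algebra_simps)
  also have "\<dots> = (1 - x)\<^sup>2"
    using x ks by (simp add: power2_eq_square algebra_simps)
  finally show "(c - x * k)\<^sup>2 + (x * s)\<^sup>2 = (1 - x)\<^sup>2" .
qed

lemma trade_off_bound_regime1: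
  fixes c k s t L :: real
  assumes ks: "k\<^sup>2 + s\<^sup>2 = 1" and c: "0 < c" "c < 1" and k: "0 < k" and s: "0 < s"
    and regime: "1 < c * (k + s)"
    and trade: "\<And>p q. p\<^sup>2 + q\<^sup>2 = 1 \<Longrightarrow> L - (p * k - q * s) * t \<le> 4 - 4 * c * p"
    and t: "\<bar>t\<bar> \<le> L"
  shows "L / 4 \<le> (1 - c\<^sup>2) / (2 * (1 - c * k))"
proof -
  define x where "x = (1 - c\<^sup>2) / (2 * (1 - c * k))"
  note x = regime1_point[OF ks c k s regime, folded x_def]
  \<comment> \<open>the unit vector at which the trade-off inequality is tight for the optimal operator\<close>
  define p where "p = (c - x * k) / (1 - x)"
  define q where "q = x * s / (1 - x)"
  have "p\<^sup>2 + q\<^sup>2 = 1"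
    using x(2,4) by (simp add: p_def q_def power_divide field_simps)
  moreover have "p * k - q * s = ((c - x * k) * k - x * s * s) / (1 - x)"
    unfolding p_def q_def by (simp add: diff_divide_distrib left_diff_distrib mult.assoc)
  moreover have "(c - x * k) * k - x * s * s = c * k - x * (k\<^sup>2 + s\<^sup>2)"
    by (simp add: algebra_simps power2_eq_square)
  ultimately have pq: "p\<^sup>2 + q\<^sup>2 = 1" "p * k - q * s = (c * k - x) / (1 - x)"
    using ks by simp_all
  have "L - (c * k - x) / (1 - x) * t \<le> 4 - 4 * c * p"
    using trade[OF pq(1)] unfolding pq(2) .
  then have "(L - (c * k - x) / (1 - x) * t) * (1 - x) \<le> (4 - 4 * c * p) * (1 - x)"
    using x(2) by (simp add: mult_right_mono)
  moreover have "(L - (c * k - x) / (1 - x) * t) * (1 - x)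
      = L * (1 - x) - (c * k - x) / (1 - x) * (1 - x) * t"
    by (simp add: algebra_simps)
  moreover have "(c * k - x) / (1 - x) * (1 - x) = c * k - x"
    using x(2) by simp
  moreover have "(4 - 4 * c * p) * (1 - x) = 4 * (1 - x) - 4 * c * (c - x * k)"
    using x(2) by (simp add: p_def left_diff_distrib)
  ultimately have "L * (1 - x) - (c * k - x) * t \<le> 4 * (1 - x) - 4 * c * (c - x * k)"
    by simp
  moreover have "(c * k - x) * t \<le> (c * k - x) * L"
    using x(3) t by (intro mult_left_mono) auto
  moreover have "4 * (1 - x) - 4 * c * (c - x * k) = 4 * x * (1 - c * k)"
    using x(5) by (simp add: algebra_simps power2_eq_square)
  ultimately have "L * (1 - c * k) \<le> 4 * x * (1 - c * k)"
    by (simp add: algebra_simps)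
  with x(6) have "L / 4 \<le> x"
    by (simp add: mult_le_cancel_right)
  then show ?thesis
    by (simp add: x_def)
qed

lemma trade_off_bound:
  fixes c k s t L :: real
  assumes ks: "k\<^sup>2 + s\<^sup>2 = 1" and c: "0 < c" "c < 1" and k: "0 < k" and s: "0 < s"
    and trade: "\<And>p q. p\<^sup>2 + q\<^sup>2 = 1 \<Longrightarrow> L - (p * k - q * s) * t \<le> 4 - 4 * c * p"
    and t: "\<bar>t\<bar> \<le> L"
  shows "L / 4 \<le> optimal_value c k s"
proof (cases "1 < c * (k + s)")
  case True
  then show ?thesis
    using trade_off_bound_regime1[OF ks c k s True trade t] c k s
    by (simp add: optimal_value_def divide_less_eq mult.commute)
next
  case False
  have "s\<^sup>2 + k\<^sup>2 = 1"
    using ks by simp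
  from trade[OF this] have "L / 4 \<le> 1 - c * s"
    by (simp add: algebra_simps)
  then show ?thesis
    using False c k s by (simp add: optimal_value_def divide_less_eq mult.commute)
qed

lemma trade_off_attained:
  fixes c k s :: real
  assumes ks: "k\<^sup>2 + s\<^sup>2 = 1" and c: "0 < c" "c < 1" and k: "0 < k" and s: "0 < s"
  shows "\<exists>y. \<bar>y\<bar> \<le> optimal_value c k s \<and> cmod (c - y * Complex k s) \<le> 1 - optimal_value c k s"
proof -
  have cmod_eq: "cmod (c - y * Complex k s) = sqrt ((c - y * k)\<^sup>2 + (y * s)\<^sup>2)" for y
    by (simp add: cmod_def power2_eq_square)
  show ?thesis
  proof (cases "1 < c * (k + s)")
    case True
    define x where "x = (1 - c\<^sup>2) / (2 * (1 - c * k))"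
    note x = regime1_point[OF ks c k s True, folded x_def]
    have "optimal_value c k s = x"
      using True c k s by (simp add: optimal_value_def x_def divide_less_eq mult.commute)
    moreover have "cmod (c - x * Complex k s) = 1 - x"
      using x(2) by (simp add: cmod_eq x(4))
    ultimately show ?thesis
      using x(1) by (intro exI[of _ x]) simp
  next
    case False
    have "c - c * k * k = c * (k\<^sup>2 + s\<^sup>2) - c * k * k"
      using ks by simp
    then have "c - c * k * k = c * s\<^sup>2"
      by (simp add: algebra_simps power2_eq_square)
    then have "(c - c * k * k)\<^sup>2 + (c * k * s)\<^sup>2 = (c * s\<^sup>2)\<^sup>2 + (c * k * s)\<^sup>2"
      by simp
    also have "\<dots> = (c * s)\<^sup>2 * (s\<^sup>2 + k\<^sup>2)"
      by (simp add: power2_eq_square algebra_simps)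
    finally have "cmod (c - (c * k) * Complex k s) = c * s"
      unfolding cmod_eq using ks c s by (simp add: add.commute)
    moreover have "optimal_value c k s = 1 - c * s"
      using False c k s by (simp add: optimal_value_def divide_less_eq mult.commute)
    ultimately show ?thesis
      using False c k by (intro exI[of _ "c * k"]) (simp add: algebra_simps)
  qed
qed

lemma angle_signs:
  fixes n :: nat and \<alpha> :: real
  assumes "n \<ge> 1" and "0 < \<alpha>" and "\<alpha> < pi / (4 * real n)"
  shows "0 < cos (2 * real n * \<alpha>)" "cos (2 * real n * \<alpha>) < 1" "sin (2 * real n * \<alpha>) \<noteq> 0"
    and "0 < cos (2 * \<alpha>)" "0 < sin (2 * \<alpha>)"
proof -
  have angles: "0 < 2 * \<alpha>" "2 * \<alpha> \<le> 2 * real n * \<alpha>" "2 * real n * \<alpha> < pi / 2"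
    using assms by (auto simp: field_simps)
  show "0 < cos (2 * real n * \<alpha>)" "0 < cos (2 * \<alpha>)"
    by (rule cos_gt_zero_pi; use angles pi_gt_zero in linarith)+
  show "0 < sin (2 * \<alpha>)"
    by (rule sin_gt_zero) (use angles pi_gt_zero in linarith)+
  have "cos (2 * real n * \<alpha>) < cos 0"
    by (rule cos_monotone_0_pi) (use angles pi_gt_zero in linarith)+
  then show "cos (2 * real n * \<alpha>) < 1"
    by simp
  have "0 < sin (2 * real n * \<alpha>)"
    by (rule sin_gt_zero) (use angles pi_gt_zero in linarith)+
  then show "sin (2 * real n * \<alpha>) \<noteq> 0"
    by simp
qed

theorem mainTheorem9:
  fixes n :: nat and \<alpha> :: real
  assumes "n \<ge> 1" and "0 < \<alpha>" and "\<alpha> < pi / (4 * real n)"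
  defines "P \<equiv> (if cos (2 * real n * \<alpha>) > 1 / (cos (2 * \<alpha>) + sin (2 * \<alpha>))
               then (1 - (cos (2 * real n * \<alpha>))\<^sup>2) /
                    (2 * (1 - cos (2 * real n * \<alpha>) * cos (2 * \<alpha>)))
               else 1 - cos (2 * real n * \<alpha>) * sin (2 * \<alpha>))"
  shows "(\<exists>R. PP_feasible n \<alpha> R \<and> PP_objective n \<alpha> R = P) \<and>
         (\<forall>R. PP_feasible n \<alpha> R \<longrightarrow> PP_objective n \<alpha> R \<le> P)"
proof
  note c = angle_signs(1,2)[OF assms(1-3)] and sn = angle_signs(3)[OF assms(1-3)]
    and k = angle_signs(4)[OF assms(1-3)] and s = angle_signs(5)[OF assms(1-3)]
  have ks: "(cos (2 * \<alpha>))\<^sup>2 + (sin (2 * \<alpha>))\<^sup>2 = 1"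
    by simp
  have P: "P = optimal_value (cos (2 * real n * \<alpha>)) (cos (2 * \<alpha>)) (sin (2 * \<alpha>))"
    by (simp add: P_def optimal_value_def)
  have cis: "Complex (cos (2 * \<alpha>)) (sin (2 * \<alpha>)) = cis (2 * \<alpha>)"
    by (simp add: complex_eq_iff)
  obtain y where "\<bar>y\<bar> \<le> P" "cmod (cos (2 * real n * \<alpha>) - y * cis (2 * \<alpha>)) \<le> 1 - P"
    using trade_off_attained[OF ks c k s] unfolding P cis by blast
  then show "\<exists>R. PP_feasible n \<alpha> R \<and> PP_objective n \<alpha> R = P"
    by (rule PP_attainable[OF sn])
  show "\<forall>R. PP_feasible n \<alpha> R \<longrightarrow> PP_objective n \<alpha> R \<le> P"
  proof (intro allI impI)
    fix R
    assume "PP_feasible n \<alpha> R"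
    then obtain t where "\<bar>t\<bar> \<le> 4 * PP_objective n \<alpha> R"
      and "\<And>p q. p\<^sup>2 + q\<^sup>2 = 1 \<Longrightarrow> 4 * PP_objective n \<alpha> R
             - (p * cos (2 * \<alpha>) - q * sin (2 * \<alpha>)) * t \<le> 4 - 4 * cos (2 * real n * \<alpha>) * p"
      using PP_feasible_trade_off by blast
    from trade_off_bound[OF ks c k s this(2,1)] show "PP_objective n \<alpha> R \<le> P"
      unfolding P by simp
  qed
qed

end
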